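(* Let $a\geq 3$ and $m\geq 2a^2-a+2$ be integers, and suppose $[C(m,a)]$ is colored with red and blue so that there is no monochromatic solution of $L(m,a)$ in $[C(m,a)]$, with both $a-2$ and $a-1$ red. Then $m-1$, $m-2$, $m-3$ are blue and $a$ is red.
   Context: For integers $m\geq 3$, $a\geq 1$, $L(m,a)$ denotes the equation $x_1+x_2+\cdots+x_{m-1}=a x_m$. For a positive integer $n$, $[n]=\{1,\dots,n\}$. A solution of $L(m,a)$ in $[n]$ is an $m$-tuple $(x_1,\dots,x_m)\in[n]^m$ (entries not necessarily distinct) satisfying the equation; given a 2-coloring of $[n]$, it is monochromatic if all $x_i$ have the same color. $C(m,a)$ denotes $\left\lceil \frac{m-1}{a}\left\lceil \frac{m-1}{a}\right\rceil\right\rceil$. *)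

theory Defs
  imports Complex_Main
begin

definition ceil_div :: "nat \<Rightarrow> nat \<Rightarrow> nat" where
  "ceil_div p b = nat \<lceil>(of_nat p :: real) / of_nat b\<rceil>"

definition C :: "nat \<Rightarrow> nat \<Rightarrow> nat" where
  "C m a = nat \<lceil>(of_nat (m - 1) :: real) / of_nat a * of_nat (ceil_div (m - 1) a)\<rceil>"

text \<open>A solution of L(m,a) in [n]: an m-tuple (x_1,...,x_m), encoded as
  x :: nat => nat on indices 1..m, with x_1+...+x_(m-1) = a x_m.\<close>
definition is_solution :: "nat \<Rightarrow> nat \<Rightarrow> nat \<Rightarrow> (nat \<Rightarrow> nat) \<Rightarrow> bool" where
  "is_solution m a n x \<longleftrightarrow> (\<forall>i\<in>{1..m}. x i \<in> {1..n}) \<and>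
     (\<Sum>i=1..m-1. x i) = a * x m"

text \<open>A 2-coloring is a predicate col :: nat => bool (True = red, False = blue);
  a solution is monochromatic if all its entries get the same color.\<close>
definition monochromatic :: "(nat \<Rightarrow> bool) \<Rightarrow> nat \<Rightarrow> (nat \<Rightarrow> nat) \<Rightarrow> bool" where
  "monochromatic col m x \<longleftrightarrow> (\<forall>i\<in>{1..m}. \<forall>j\<in>{1..m}. col (x i) = col (x j))"

end

theory Submission
  imports Defs
begin

(* Since m \<ge> a^2 + 1 we have ceil((m-1)/a) \<ge> a, hence C(m,a) \<ge> m - 1,
   so every number below m lies in the coloured range [C(m,a)].  Two explicit
   families of solutions of L(m,a) then do the work:
   - the constant tuple (a, ..., a, m-1), which forces a and m-1 to differ in colour;
   - for m-3 \<le> k with (a-2) k \<le> (m-3)(a-1), the tuple consisting of two copies of k,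
     s = (m-3)(a-1) - (a-2) k copies of a-2, and a-1 elsewhere, with last entry k.
     If a-2 and a-1 are red, k must therefore be blue; k = m-1, m-2, m-3 qualify
     as soon as 2a \<le> m + 1.
   Blueness of m-1 and the first family then make a red. *)

lemma sum_split_at_threshold:
  fixes g :: "nat \<Rightarrow> 'b::comm_semiring_1"
  assumes "q \<le> N"
  shows "(\<Sum>i=1..N. if i \<le> q then g i else w) = (\<Sum>i=1..q. g i) + of_nat (N - q) * w"
  using assms
proof (induction N)
  case 0
  then show ?case by simp
next
  case (Suc N)
  show ?case
  proof (cases "q = Suc N")
    case True
    have "(\<Sum>i=1..Suc N. if i \<le> q then g i else w) = (\<Sum>i=1..q. g i)"
      using True by (intro sum.cong) auto
    then show ?thesis using True by simp
  next
    case False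
    with Suc have "q \<le> N" by simp
    with Suc.IH show ?thesis by (simp add: Suc_diff_le algebra_simps)
  qed
qed

lemma sum_three_blocks:
  fixes u v w :: nat
  assumes "p \<le> q" and "q \<le> N"
  shows "(\<Sum>i=1..N. if i \<le> p then u else if i \<le> q then v else w)
           = p * u + (q - p) * v + (N - q) * w"
proof -
  have "(\<Sum>i=1..N. if i \<le> p then u else if i \<le> q then v else w)
          = (\<Sum>i=1..q. if i \<le> p then u else v) + (N - q) * w"
  proof -
    have "(\<Sum>i=1..N. if i \<le> p then u else if i \<le> q then v else w)
            = (\<Sum>i=1..N. if i \<le> q then (if i \<le> p then u else v) else w)"
      using assms(1) by (intro sum.cong) auto
    then show ?thesis
      using sum_split_at_threshold[OF assms(2), of "\<lambda>i. if i \<le> p then u else v" w] by simp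
  qed
  also have "(\<Sum>i=1..q. if i \<le> p then u else v) = p * u + (q - p) * v"
    using sum_split_at_threshold[OF assms(1), of "\<lambda>_. u" v] by simp
  finally show ?thesis .
qed

text \<open>If a^2 < m then ceil((m-1)/a) \<ge> a, so C(m,a) \<ge> m - 1: every number below m
  lies in the coloured interval.\<close>
lemma C_ge_m_minus_1:
  assumes "a > 0" and "a * a \<le> m - 1"
  shows "m - 1 \<le> C m a"
proof -
  have "real a * real a \<le> real (m - 1)"
    using assms(2) by (metis of_nat_le_iff of_nat_mult)
  then have "real a \<le> real (m - 1) / real a"
    using assms(1) by (simp add: field_simps)
  then have "real a \<le> of_int \<lceil>real (m - 1) / real a\<rceil>"
    using le_of_int_ceiling order_trans by blast
  then have ceil_ge: "real a \<le> real (ceil_div (m - 1) a)"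
    unfolding ceil_div_def by linarith
  have "real (m - 1) = real (m - 1) / real a * real a"
    using assms(1) by simp
  also have "\<dots> \<le> real (m - 1) / real a * real (ceil_div (m - 1) a)"
    using ceil_ge by (intro mult_left_mono) auto
  also have "\<dots> \<le> of_int \<lceil>real (m - 1) / real a * real (ceil_div (m - 1) a)\<rceil>"
    by (rule le_of_int_ceiling)
  finally show ?thesis
    unfolding C_def by linarith
qed

lemma constant_tuple_solution:
  assumes "2 \<le> m" and "1 \<le> a" and "a \<le> n" and "m - 1 \<le> n"
  shows "is_solution m a n (\<lambda>i. if i = m then m - 1 else a)"
proof -
  have "(\<Sum>i=1..m-1. if i = m then m - 1 else a) = (\<Sum>i=1..m-1. a)"
    by (intro sum.cong) auto
  then have "(\<Sum>i=1..m-1. if i = m then m - 1 else a) = a * (m - 1)"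
    by simp
  then show ?thesis
    using assms unfolding is_solution_def by auto
qed

text \<open>The left-hand side is 2k + (m-3)(a-1) - s = a k.\<close>
lemma three_value_solution:
  fixes m a n k :: nat
  defines "s \<equiv> (m - 3) * (a - 1) - (a - 2) * k"
  assumes "3 \<le> a" and "3 \<le> m" and "m - 3 \<le> k" and "(a - 2) * k \<le> (m - 3) * (a - 1)"
    and "1 \<le> k" and "k \<le> n" and "a - 1 \<le> n"
  shows "is_solution m a n
           (\<lambda>i. if i \<le> 2 then k else if i \<le> 2 + s then a - 2 else if i = m then k else a - 1)"
    (is "is_solution m a n ?x")
proof -
  have "(a - 2) * (m - 3) \<le> (a - 2) * k"
    using assms(4) by simp
  moreover have "(m - 3) * (a - 1) = (a - 2) * (m - 3) + (m - 3)"
  proof -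
    have "a - 1 = (a - 2) + 1"
      using assms(2) by simp
    then show ?thesis
      by (simp add: algebra_simps)
  qed
  ultimately have s_le: "s \<le> m - 3"
    unfolding s_def by linarith
  have "(\<Sum>i=1..m-1. ?x i)
          = (\<Sum>i=1..m-1. if i \<le> 2 then k else if i \<le> 2 + s then a - 2 else a - 1)"
    by (intro sum.cong) auto
  also have "\<dots> = 2 * k + s * (a - 2) + (m - 1 - (2 + s)) * (a - 1)"
    using sum_three_blocks[of 2 "2 + s" "m - 1" k "a - 2" "a - 1"] s_le assms(3) by simp
  also have "\<dots> = a * k"
  proof -
    have "int s = int (m - 3) * (int a - 1) - (int a - 2) * int k"
      using assms(2,5) unfolding s_def by (simp add: of_nat_diff)
    moreover have "int (2 * k + s * (a - 2) + (m - 1 - (2 + s)) * (a - 1))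
                 = 2 * int k + int s * (int a - 2) + (int (m - 3) - int s) * (int a - 1)"
      using s_le assms(2,3) by (simp add: of_nat_diff)
    ultimately have "int (2 * k + s * (a - 2) + (m - 1 - (2 + s)) * (a - 1)) = int (a * k)"
      by (simp add: algebra_simps)
    then show ?thesis
      by (simp only: of_nat_eq_iff)
  qed
  finally have "(\<Sum>i=1..m-1. ?x i) = a * k" .
  moreover have "?x m = k"
    using s_le assms(3) by auto
  ultimately have "(\<Sum>i=1..m-1. ?x i) = a * ?x m"
    by simp
  moreover have "\<forall>i\<in>{1..m}. ?x i \<in> {1..n}"
    using assms(2,6,7,8) by auto
  ultimately show ?thesis
    unfolding is_solution_def by blast
qed

text \<open>Consequence of the second family: if a-2 and a-1 are red and there is no
  monochromatic solution, then each of m-3, m-2, m-1 is blue (provided m \<ge> 2a - 1,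
  which makes (a-2) k \<le> (m-3)(a-1) for k \<le> m - 1).\<close>
lemma top_values_blue:
  fixes red :: "nat \<Rightarrow> bool"
  assumes "3 \<le> a" and "2 * a \<le> m + 1" and "m - 1 \<le> C m a"
    and no_mono: "\<not> (\<exists>x. is_solution m a (C m a) x \<and> monochromatic red m x)"
    and "red (a - 2)" and "red (a - 1)"
    and "m - 3 \<le> k" and "k \<le> m - 1"
  shows "\<not> red k"
proof
  assume red_k: "red k"
  have "int ((a - 2) * k) \<le> (int a - 2) * (int m - 1)"
    using assms(1,2,8) by (simp add: of_nat_diff mult_left_mono)
  also have "\<dots> \<le> (int m - 3) * (int a - 1)"
    using assms(1,2) by (simp add: algebra_simps)
  also have "\<dots> = int ((m - 3) * (a - 1))"
    using assms(1,2) by (simp add: of_nat_diff)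
  finally have k_small: "(a - 2) * k \<le> (m - 3) * (a - 1)"
    by (simp only: of_nat_le_iff)
  define s where "s = (m - 3) * (a - 1) - (a - 2) * k"
  define x where "x = (\<lambda>i. if i \<le> 2 then k else if i \<le> 2 + s then a - 2
                          else if i = m then k else a - 1)"
  have "is_solution m a (C m a) x"
    unfolding x_def s_def
    using assms k_small by (intro three_value_solution) auto
  moreover have "monochromatic red m x"
    unfolding monochromatic_def x_def using red_k assms(5,6) by auto
  ultimately show False
    using no_mono by blast
qed

theorem lemma4:
  fixes m a :: nat and red :: "nat \<Rightarrow> bool"
  assumes "a \<ge> 3" and "m \<ge> 2 * a^2 - a + 2"
    and "\<not> (\<exists>x. is_solution m a (C m a) x \<and> monochromatic red m x)"
    and "red (a - 2)" and "red (a - 1)"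
  shows "\<not> red (m - 1) \<and> \<not> red (m - 2) \<and> \<not> red (m - 3) \<and> red a"
proof -
  have "3 * a \<le> a * a" and "m \<ge> 2 * (a * a) - a + 2"
    using assms(1,2) by (simp_all add: power2_eq_square)
  then have m_large: "a * a \<le> m - 1" "2 * a \<le> m + 1"
    by linarith+
  have C_large: "m - 1 \<le> C m a"
    using C_ge_m_minus_1 m_large assms(1) by simp
  note blue = top_values_blue[OF assms(1) m_large(2) C_large assms(3-5)]
  have "\<not> red (m - 1)" "\<not> red (m - 2)" "\<not> red (m - 3)"
    by (intro blue; simp)+
  moreover have "red a"
  proof (rule ccontr)
    assume "\<not> red a"
    then have "monochromatic red m (\<lambda>i. if i = m then m - 1 else a)"
      using \<open>\<not> red (m - 1)\<close> unfolding monochromatic_def by auto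
    moreover have "is_solution m a (C m a) (\<lambda>i. if i = m then m - 1 else a)"
      using m_large C_large assms(1) by (intro constant_tuple_solution) auto
    ultimately show False
      using assms(3) by blast
  qed
  ultimately show ?thesis
    by blast
qed

end
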